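(* Let $(I,H)$ be a finite graph without edge loops with an admissible automorphism $a$ and an $a$-stable orientation $\Omega$ without oriented cycles, let $\mathbf n$ be a common multiple of all orbit sizes $d_i$ ($i\in I$) and $d_h$ ($h\in H$), and let $(\widetilde I,\widetilde H,\widetilde\Omega)$ with automorphism $\widetilde a$ be the split-quotient quiver of $(I,H,\Omega,a,\mathbf n)$. Then the Cartan matrix associated to $(\widetilde I,\widetilde H,\widetilde a)$ (with rows and columns indexed by the representatives $(i,1)$, $i\in\widehat I$) is the transpose of the Cartan matrix associated to $(I,H,a)$: $c_{(i,1)(j,1)}=c_{ji}$ for all $i,j\in\widehat I$.
   Context: Graph conventions: $I$ is the vertex set, $H$ the set of edges with an orientation (each edge appears twice), $s,t:H\to I$ source/target, $h\mapsto\bar h$ reversal; an orientation is $\Omega\subset H$ with $H=\Omega\sqcup\bar\Omega$. An admissible automorphism $a$ consists of permutations of $I$ and $H$ with $s(a(h))=a(s(h))$, $t(a(h))=a(t(h))$, $\overline{a(h)}=a(\bar h)$, such that no two adjacent vertices lie in the same $\langle a\rangle$-orbit; we assume $a(\Omega)=\Omega$. $d_i$ (resp. $d_h$) is the size of the $\langle a\rangle$-orbit of $i$ (resp. $h$); $e_i=\mathbf n/d_i$, $e_h=\mathbf n/d_h$. Split-quotient quiver: let $\widehat I$ be a set of representatives of $\langle a\rangle$-orbits in $I$, $\widehat H$ the set of $\langle a\rangle$-orbits in $H$, $\widehat\Omega$ those in $\Omega$; for $\widehat h=\langle a\rangle h$ let $s(\widehat h)$, $t(\widehat h)$ be the representatives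 of the orbits of $s(h),t(h)$, $e_{\widehat h}=e_h$, $\overline{\widehat h}=\langle a\rangle\bar h$. Put $\widetilde I=\{(i,\zeta):i\in\widehat I,\ \zeta\in\mu_{e_i}\}$ ($\mu_e$ the complex $e$-th roots of unity), $\widetilde H=\{(\widehat h,\zeta,\zeta'):\widehat h\in\widehat H,\zeta\in\mu_{e_{s(\widehat h)}},\zeta'\in\mu_{e_{t(\widehat h)}},\ \zeta^{e_{s(\widehat h)}/e_{\widehat h}}=\zeta'^{\,e_{t(\widehat h)}/e_{\widehat h}}\}$, $s(\widehat h,\zeta,\zeta')=(s(\widehat h),\zeta)$, $t(\widehat h,\zeta,\zeta')=(t(\widehat h),\zeta')$, $\overline{(\widehat h,\zeta,\zeta')}=(\overline{\widehat h},\zeta',\zeta)$, $\widetilde\Omega=\{(\widehat h,\zeta,\zeta'):\widehat h\in\widehat\Omega\}$. Fixing a primitive $\mathbf n$-th root of unity $\eta$, $\widetilde a(i,\zeta)=(i,\zeta\eta^{d_i})$, $\widetilde a(\widehat h,\zeta,\zeta')=(\widehat h,\zeta\eta^{d_{s(\widehat h)}},\zeta'\eta^{d_{t(\widehat h)}})$; this is an admissible automorphism and $\{(i,1):i\in\widehat I\}$ is a set of orbit representatives in $\widetilde I$. Cartan matrix of $(I,H,a)$: indexed by $\widehat I$, $c_{ii}=2$ and for $i\ne j$, $-c_{ij}=d_i^{-1}\,|\{h\in H: s(h)\in\langle a\rangle i,\ t(h)\in\langle a\rangle j\}|$; similarly for $(\widetilde I,\widetilde H,\widetilde a)$ using orbit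 sizes of $\widetilde a$. *)

theory Defs
  imports Complex_Main
begin

definition orbit :: "('a \<Rightarrow> 'a) \<Rightarrow> 'a \<Rightarrow> 'a set" where
  "orbit f x = range (\<lambda>k. (f ^^ k) x)"

definition orb_size :: "('a \<Rightarrow> 'a) \<Rightarrow> 'a \<Rightarrow> nat" where
  "orb_size f x = card (orbit f x)"

text \<open>Finite graph (vertex set I, oriented-edge set H, source s, target t, reversal rv)
  without edge loops, with an admissible automorphism (aI on vertices, aH on edges).\<close>
definition graph_with_admissible_aut ::
  "'v set \<Rightarrow> 'e set \<Rightarrow> ('e \<Rightarrow> 'v) \<Rightarrow> ('e \<Rightarrow> 'v) \<Rightarrow> ('e \<Rightarrow> 'e) \<Rightarrow> ('v \<Rightarrow> 'v) \<Rightarrow> ('e \<Rightarrow> 'e) \<Rightarrow> bool" where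
  "graph_with_admissible_aut I H s t rv aI aH \<longleftrightarrow>
     finite I \<and> finite H \<and>
     (\<forall>h\<in>H. s h \<in> I \<and> t h \<in> I \<and> rv h \<in> H \<and> rv (rv h) = h \<and> rv h \<noteq> h \<and>
              s (rv h) = t h \<and> t (rv h) = s h) \<and>
     (\<forall>h\<in>H. s h \<noteq> t h) \<and>
     bij_betw aI I I \<and> bij_betw aH H H \<and>
     (\<forall>h\<in>H. s (aH h) = aI (s h) \<and> t (aH h) = aI (t h) \<and> rv (aH h) = aH (rv h)) \<and>
     (\<forall>h\<in>H. t h \<notin> orbit aI (s h))"

definition stable_acyclic_orientation ::
  "'e set \<Rightarrow> ('e \<Rightarrow> 'v) \<Rightarrow> ('e \<Rightarrow> 'v) \<Rightarrow> ('e \<Rightarrow> 'e) \<Rightarrow> ('e \<Rightarrow> 'e) \<Rightarrow> 'e set \<Rightarrow> bool" where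
  "stable_acyclic_orientation H s t rv aH \<Omega> \<longleftrightarrow>
     \<Omega> \<subseteq> H \<and> (\<forall>h\<in>H. (h \<in> \<Omega>) \<noteq> (rv h \<in> \<Omega>)) \<and> aH ` \<Omega> = \<Omega> \<and>
     acyclic {(s h, t h) | h. h \<in> \<Omega>}"

definition orbit_reps :: "'v set \<Rightarrow> ('v \<Rightarrow> 'v) \<Rightarrow> 'v set \<Rightarrow> bool" where
  "orbit_reps I aI Ihat \<longleftrightarrow> Ihat \<subseteq> I \<and> (\<forall>i\<in>I. \<exists>!j. j \<in> Ihat \<and> j \<in> orbit aI i)"

definition rep :: "'v set \<Rightarrow> ('v \<Rightarrow> 'v) \<Rightarrow> 'v \<Rightarrow> 'v" where
  "rep Ihat aI v = (THE j. j \<in> Ihat \<and> j \<in> orbit aI v)"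

definition cartan :: "'e set \<Rightarrow> ('e \<Rightarrow> 'v) \<Rightarrow> ('e \<Rightarrow> 'v) \<Rightarrow> ('v \<Rightarrow> 'v) \<Rightarrow> 'v \<Rightarrow> 'v \<Rightarrow> real" where
  "cartan H s t f i j =
     (if i = j then 2
      else - real (card {h \<in> H. s h \<in> orbit f i \<and> t h \<in> orbit f j}) / real (orb_size f i))"

definition Hhat :: "'e set \<Rightarrow> ('e \<Rightarrow> 'e) \<Rightarrow> 'e set set" where
  "Hhat H aH = orbit aH ` H"

definition Omhat :: "'e set \<Rightarrow> ('e \<Rightarrow> 'e) \<Rightarrow> 'e set set" where
  "Omhat \<Omega> aH = orbit aH ` \<Omega>"

definition e_of :: "nat \<Rightarrow> ('a \<Rightarrow> 'a) \<Rightarrow> 'a \<Rightarrow> nat" where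
  "e_of n f x = n div orb_size f x"

definition hat_s :: "'v set \<Rightarrow> ('v \<Rightarrow> 'v) \<Rightarrow> ('e \<Rightarrow> 'v) \<Rightarrow> 'e set \<Rightarrow> 'v" where
  "hat_s Ihat aI s Eo = rep Ihat aI (s (SOME h. h \<in> Eo))"

definition hat_e :: "nat \<Rightarrow> ('e \<Rightarrow> 'e) \<Rightarrow> 'e set \<Rightarrow> nat" where
  "hat_e n aH Eo = e_of n aH (SOME h. h \<in> Eo)"

definition hat_rev :: "('e \<Rightarrow> 'e) \<Rightarrow> ('e \<Rightarrow> 'e) \<Rightarrow> 'e set \<Rightarrow> 'e set" where
  "hat_rev aH rv Eo = orbit aH (rv (SOME h. h \<in> Eo))"

definition tilde_I :: "nat \<Rightarrow> 'v set \<Rightarrow> ('v \<Rightarrow> 'v) \<Rightarrow> ('v \<times> complex) set" where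
  "tilde_I n Ihat aI = {(i, z). i \<in> Ihat \<and> z ^ e_of n aI i = 1}"

definition tilde_H ::
  "nat \<Rightarrow> 'v set \<Rightarrow> 'e set \<Rightarrow> ('e \<Rightarrow> 'v) \<Rightarrow> ('e \<Rightarrow> 'v) \<Rightarrow> ('v \<Rightarrow> 'v) \<Rightarrow> ('e \<Rightarrow> 'e)
    \<Rightarrow> ('e set \<times> complex \<times> complex) set" where
  "tilde_H n Ihat H s t aI aH =
     {(Eo, z, z'). Eo \<in> Hhat H aH \<and>
        z ^ e_of n aI (hat_s Ihat aI s Eo) = 1 \<and> z' ^ e_of n aI (hat_s Ihat aI t Eo) = 1 \<and>
        z ^ (e_of n aI (hat_s Ihat aI s Eo) div hat_e n aH Eo)
          = z' ^ (e_of n aI (hat_s Ihat aI t Eo) div hat_e n aH Eo)}"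

definition tilde_Omega ::
  "nat \<Rightarrow> 'v set \<Rightarrow> 'e set \<Rightarrow> 'e set \<Rightarrow> ('e \<Rightarrow> 'v) \<Rightarrow> ('e \<Rightarrow> 'v) \<Rightarrow> ('v \<Rightarrow> 'v) \<Rightarrow> ('e \<Rightarrow> 'e)
    \<Rightarrow> ('e set \<times> complex \<times> complex) set" where
  "tilde_Omega n Ihat H \<Omega> s t aI aH = {x \<in> tilde_H n Ihat H s t aI aH. fst x \<in> Omhat \<Omega> aH}"

definition tilde_s :: "'v set \<Rightarrow> ('v \<Rightarrow> 'v) \<Rightarrow> ('e \<Rightarrow> 'v) \<Rightarrow> 'e set \<times> complex \<times> complex \<Rightarrow> 'v \<times> complex" where
  "tilde_s Ihat aI s x = (case x of (Eo, z, z') \<Rightarrow> (hat_s Ihat aI s Eo, z))"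

definition tilde_t :: "'v set \<Rightarrow> ('v \<Rightarrow> 'v) \<Rightarrow> ('e \<Rightarrow> 'v) \<Rightarrow> 'e set \<times> complex \<times> complex \<Rightarrow> 'v \<times> complex" where
  "tilde_t Ihat aI t x = (case x of (Eo, z, z') \<Rightarrow> (hat_s Ihat aI t Eo, z'))"

definition tilde_rev :: "('e \<Rightarrow> 'e) \<Rightarrow> ('e \<Rightarrow> 'e) \<Rightarrow> 'e set \<times> complex \<times> complex \<Rightarrow> 'e set \<times> complex \<times> complex" where
  "tilde_rev aH rv x = (case x of (Eo, z, z') \<Rightarrow> (hat_rev aH rv Eo, z', z))"

definition tilde_aI :: "('v \<Rightarrow> 'v) \<Rightarrow> complex \<Rightarrow> 'v \<times> complex \<Rightarrow> 'v \<times> complex" where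
  "tilde_aI aI \<eta> x = (case x of (i, z) \<Rightarrow> (i, z * \<eta> ^ orb_size aI i))"

definition tilde_aH :: "'v set \<Rightarrow> ('v \<Rightarrow> 'v) \<Rightarrow> ('e \<Rightarrow> 'v) \<Rightarrow> ('e \<Rightarrow> 'v) \<Rightarrow> complex
    \<Rightarrow> 'e set \<times> complex \<times> complex \<Rightarrow> 'e set \<times> complex \<times> complex" where
  "tilde_aH Ihat aI s t \<eta> x = (case x of (Eo, z, z') \<Rightarrow>
     (Eo, z * \<eta> ^ orb_size aI (hat_s Ihat aI s Eo), z' * \<eta> ^ orb_size aI (hat_s Ihat aI t Eo)))"

end

theory Submission
  imports Defs
begin

text \<open>Both entries count the edges from the orbit of i to the orbit of j, grouped by edge
  orbit. An edge orbit of size d_h contributes d_h edges, so -c_ji is the sum of d_h / d_j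
  (read off from the reversed edges). In the split-quotient quiver the same orbit contributes the
  pairs (z, z') of e_i-th and e_j-th roots of unity with z^(e_i/e_h) = z'^(e_j/e_h); there are
  e_i e_j / e_h = e_i d_h / d_j of them, and the orbit of (i, 1) is {i} x mu_(e_i), of size e_i.
  So -c_(i,1)(j,1) is the same sum.\<close>

lemma funpow_apply_add: "(f ^^ m) ((f ^^ n) x) = (f ^^ (m + n)) x"
  by (simp add: funpow_add)

lemma orbit_eq_image_period:
  assumes "0 < p" "(f ^^ p) x = x"
  shows "orbit f x = (\<lambda>k. (f ^^ k) x) ` {..<p}"
  unfolding orbit_def
proof (intro equalityI subsetI)
  fix y assume "y \<in> range (\<lambda>k. (f ^^ k) x)"
  then obtain k where "y = (f ^^ k) x" by auto
  then have "y = (f ^^ (k mod p)) x" using funpow_mod_eq[OF assms(2)] by simp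
  then show "y \<in> (\<lambda>k. (f ^^ k) x) ` {..<p}" using assms(1) by auto
qed auto

lemma orb_size_minimal_period:
  assumes "0 < p" "(f ^^ p) x = x"
  shows "0 < orb_size f x" "(f ^^ orb_size f x) x = x"
    and "\<And>r. 0 < r \<Longrightarrow> r < orb_size f x \<Longrightarrow> (f ^^ r) x \<noteq> x"
proof -
  define q where "q = (LEAST q. 0 < q \<and> (f ^^ q) x = x)"
  have q: "0 < q" "(f ^^ q) x = x"
    using LeastI[of "\<lambda>q. 0 < q \<and> (f ^^ q) x = x", OF conjI[OF assms]] unfolding q_def by auto
  have q_least: "(f ^^ r) x \<noteq> x" if "0 < r" "r < q" for r
    using not_less_Least[of r "\<lambda>q. 0 < q \<and> (f ^^ q) x = x"] that unfolding q_def by blast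
  have no_repeat: "(f ^^ a) x \<noteq> (f ^^ b) x" if "a < b" "b < q" for a b
  proof
    assume ab: "(f ^^ a) x = (f ^^ b) x"
    have "(f ^^ (q - b + a)) x = (f ^^ (q - b)) ((f ^^ a) x)" by (simp add: funpow_apply_add)
    also have "\<dots> = (f ^^ (q - b + b)) x" by (simp add: ab funpow_apply_add)
    also have "\<dots> = x" using that q(2) by simp
    finally show False using q_least[of "q - b + a"] that by fastforce
  qed
  have "inj_on (\<lambda>k. (f ^^ k) x) {..<q}"
    by (rule inj_onI) (metis lessThan_iff linorder_neq_iff no_repeat)
  then have "orb_size f x = q"
    unfolding orb_size_def orbit_eq_image_period[OF q] by (simp add: card_image)
  then show "0 < orb_size f x" "(f ^^ orb_size f x) x = x"
    and "\<And>r. 0 < r \<Longrightarrow> r < orb_size f x \<Longrightarrow> (f ^^ r) x \<noteq> x"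
    using q q_least by auto
qed

lemma funpow_eq_self_iff_orb_size_dvd:
  assumes "0 < p" "(f ^^ p) x = x"
  shows "(f ^^ k) x = x \<longleftrightarrow> orb_size f x dvd k"
proof -
  note d = orb_size_minimal_period[OF assms]
  have "(f ^^ k) x = x \<longleftrightarrow> (f ^^ (k mod orb_size f x)) x = x" using funpow_mod_eq[OF d(2)] by simp
  also have "\<dots> \<longleftrightarrow> k mod orb_size f x = 0"
    using d(1) d(3)[of "k mod orb_size f x"] by (cases "k mod orb_size f x = 0") auto
  finally show ?thesis by auto
qed

lemma self_in_orbit: "x \<in> orbit f x"
  unfolding orbit_def by (metis rangeI funpow_0)

lemma orbit_subset_orbit: "y \<in> orbit f x \<Longrightarrow> orbit f y \<subseteq> orbit f x"
  unfolding orbit_def by (auto simp: funpow_apply_add)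

lemma orbit_eq_if_mem:
  assumes "0 < p" "(f ^^ p) x = x" "y \<in> orbit f x"
  shows "orbit f y = orbit f x"
proof
  obtain a where a: "y = (f ^^ a) x" using assms(3) unfolding orbit_def by auto
  have "((f ^^ p) ^^ a) x = x" by (induction a) (simp_all add: assms(2))
  then have "(f ^^ (p * a - a)) y = x"
    using assms(1) by (simp add: a funpow_mult funpow_apply_add)
  then have "x \<in> orbit f y" unfolding orbit_def by (metis rangeI)
  then show "orbit f x \<subseteq> orbit f y" by (rule orbit_subset_orbit)
qed (rule orbit_subset_orbit[OF assms(3)])

lemma periodic_if_bij_betw_finite:
  assumes "finite A" "bij_betw f A A" "x \<in> A"
  obtains p where "0 < p" "(f ^^ p) x = x"
proof -
  have in_A: "(f ^^ k) x \<in> A" for k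
    using bij_betwE[OF bij_betw_funpow[OF assms(2)]] assms(3) by blast
  have "\<not> inj_on (\<lambda>k. (f ^^ k) x) {..card A}"
  proof
    assume "inj_on (\<lambda>k. (f ^^ k) x) {..card A}"
    then have "Suc (card A) \<le> card A"
      using card_inj_on_le[of _ "{..card A}" A] in_A assms(1) by auto
    then show False by simp
  qed
  then obtain a b where ab: "a < b" "(f ^^ a) x = (f ^^ b) x"
    unfolding inj_on_def by (metis linorder_neq_iff)
  have "(f ^^ a) ((f ^^ (b - a)) x) = (f ^^ a) x" using ab by (simp add: funpow_apply_add)
  moreover have "inj_on (f ^^ a) A" using bij_betw_funpow[OF assms(2)] bij_betw_def by blast
  ultimately have "(f ^^ (b - a)) x = x" using in_A assms(3) by (meson inj_onD)
  then show ?thesis using ab by (intro that[of "b - a"]) auto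
qed

lemma range_power_primitive_root:
  fixes \<zeta> :: complex
  assumes primitive: "\<And>k. \<zeta> ^ k = 1 \<longleftrightarrow> m dvd k" and "0 < m"
  shows "range ((^) \<zeta>) = {z. z ^ m = 1}"
proof -
  have "\<zeta> \<noteq> 0" using primitive[of m] \<open>0 < m\<close> by (auto simp: power_0_left)
  have roots: "range ((^) \<zeta>) \<subseteq> {z. z ^ m = 1}"
    using primitive by (auto simp flip: power_mult simp: mult.commute)
  have "inj_on ((^) \<zeta>) {..<m}"
  proof (rule inj_onI)
    have no_repeat: False if "a < b" "b < m" "\<zeta> ^ a = \<zeta> ^ b" for a b
    proof -
      have "\<zeta> ^ a * \<zeta> ^ (b - a) = \<zeta> ^ b"
        using that by (metis power_add le_add_diff_inverse less_imp_le)
      then have "\<zeta> ^ a * \<zeta> ^ (b - a) = \<zeta> ^ a * 1" using that by simp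
      then have "m dvd b - a" using primitive \<open>\<zeta> \<noteq> 0\<close> by simp
      then show False using that by (simp add: nat_dvd_not_less)
    qed
    show "a = b" if "a \<in> {..<m}" "b \<in> {..<m}" "\<zeta> ^ a = \<zeta> ^ b" for a b
      using that no_repeat[of a b] no_repeat[of b a] by (metis lessThan_iff linorder_neq_iff)
  qed
  then have "card ((^) \<zeta> ` {..<m}) = card {z::complex. z ^ m = 1}"
    using card_roots_unity_eq[OF \<open>0 < m\<close>] by (simp add: card_image)
  then have "(^) \<zeta> ` {..<m} = {z. z ^ m = 1}"
    using roots finite_roots_unity[of m] \<open>0 < m\<close> by (intro card_subset_eq) auto
  then show ?thesis using roots by blast
qed

text \<open>The edges of the split-quotient quiver over one edge orbit, with m = e_i, m' = e_j, e = e_h.\<close>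
definition compatible_root_pairs :: "nat \<Rightarrow> nat \<Rightarrow> nat \<Rightarrow> (complex \<times> complex) set" where
  "compatible_root_pairs m m' e = {(z, z'). z ^ m = 1 \<and> z' ^ m' = 1 \<and> z ^ (m div e) = z' ^ (m' div e)}"

lemma finite_compatible_root_pairs:
  assumes "0 < m" "0 < m'"
  shows "finite (compatible_root_pairs m m' e)"
proof (rule finite_subset)
  show "compatible_root_pairs m m' e \<subseteq> {z. z ^ m = 1} \<times> {z. z ^ m' = 1}"
    unfolding compatible_root_pairs_def by auto
qed (use assms finite_roots_unity in auto)

lemma card_compatible_root_pairs:
  assumes "0 < e" "e dvd m" "e dvd m'" "0 < m" "0 < m'"
  shows "card (compatible_root_pairs m m' e) * e = m * m'"
proof -
  obtain u w where m: "m = u * e" and m': "m' = w * e"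
    using assms(2,3) by (metis dvdE mult.commute)
  have "0 < w" using assms m' by auto
  have fibre: "card {z'::complex. z' ^ w = z ^ u} = w" if "z ^ m = 1" for z :: complex
    using that \<open>0 < w\<close> assms(4) by (intro card_nth_roots) (auto simp: power_0_left)
  have "compatible_root_pairs m m' e = Sigma {z. z ^ m = 1} (\<lambda>z. {z'. z' ^ w = z ^ u})"
    using assms(1) by (auto simp: compatible_root_pairs_def m m' power_mult)
  then have "card (compatible_root_pairs m m' e)
               = (\<Sum>z\<in>{z::complex. z ^ m = 1}. card {z'. z' ^ w = z ^ u})"
    using finite_roots_unity[of m] finite_nth_roots[OF \<open>0 < w\<close>] assms(4)
    by (simp only:) (intro card_SigmaI, auto)
  also have "\<dots> = (\<Sum>z\<in>{z::complex. z ^ m = 1}. w)" by (rule sum.cong) (auto simp: fibre)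
  also have "\<dots> = m * w" using card_roots_unity_eq[OF assms(4)] by simp
  finally show ?thesis by (simp add: m')
qed

lemma power_eq_one_iff_dvd_order:
  fixes \<eta> :: "'a::monoid_mult"
  assumes "0 < n" "\<eta> ^ n = 1" "\<forall>k. 0 < k \<and> k < n \<longrightarrow> \<eta> ^ k \<noteq> 1"
  shows "\<eta> ^ k = 1 \<longleftrightarrow> n dvd k"
proof -
  have "\<eta> ^ k = \<eta> ^ (n * (k div n) + k mod n)" by simp
  also have "\<dots> = \<eta> ^ (k mod n)" by (simp only: power_add power_mult assms(2) power_one mult_1)
  finally have "\<eta> ^ k = \<eta> ^ (k mod n)" .
  moreover have "\<eta> ^ (k mod n) = 1 \<longleftrightarrow> k mod n = 0"
    using assms(3) mod_less_divisor[OF assms(1), of k] by auto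
  ultimately show ?thesis by (simp add: dvd_eq_mod_eq_0)
qed

lemma e_of_pos: "0 < n \<Longrightarrow> orb_size f x dvd n \<Longrightarrow> 0 < e_of n f x"
  unfolding e_of_def by (auto elim: dvdE)

lemma funpow_tilde_aI: "(tilde_aI aI \<eta> ^^ k) (i, z) = (i, z * \<eta> ^ (k * orb_size aI i))"
  by (induction k) (simp_all add: tilde_aI_def power_add mult_ac)

lemma orbit_tilde_aI:
  fixes \<eta> :: complex
  assumes primitive: "\<And>k. \<eta> ^ k = 1 \<longleftrightarrow> n dvd k" and "0 < n" and "orb_size aI i dvd n"
  shows "orbit (tilde_aI aI \<eta>) (i, 1) = Pair i ` {z. z ^ e_of n aI i = 1}"
proof -
  define d where "d = orb_size aI i"
  obtain e where n: "n = d * e" using assms(3) unfolding d_def by blast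
  have "0 < d" "0 < e" using n \<open>0 < n\<close> by auto
  have "(\<eta> ^ d) ^ k = 1 \<longleftrightarrow> e dvd k" for k
    using primitive \<open>0 < d\<close> by (simp add: n flip: power_mult)
  then have "range ((^) (\<eta> ^ d)) = {z. z ^ e = 1}"
    using \<open>0 < e\<close> by (rule range_power_primitive_root)
  moreover have "(tilde_aI aI \<eta> ^^ k) (i, 1) = (i, (\<eta> ^ d) ^ k)" for k
    by (simp add: funpow_tilde_aI d_def power_mult[symmetric] mult.commute)
  then have "orbit (tilde_aI aI \<eta>) (i, 1) = Pair i ` range ((^) (\<eta> ^ d))"
    unfolding orbit_def by auto
  ultimately show ?thesis using \<open>0 < d\<close> by (simp add: e_of_def n d_def)
qed

lemma orb_size_tilde_aI:
  fixes \<eta> :: complex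
  assumes "\<And>k. \<eta> ^ k = 1 \<longleftrightarrow> n dvd k" and "0 < n" and "orb_size aI i dvd n"
  shows "orb_size (tilde_aI aI \<eta>) (i, 1) = e_of n aI i"
proof -
  have "0 < e_of n aI i" using assms(2,3) by (rule e_of_pos)
  then show ?thesis
    unfolding orb_size_def orbit_tilde_aI[OF assms]
    by (simp add: card_image inj_on_def card_roots_unity_eq)
qed

locale graph_with_orbit_reps =
  fixes I :: "'v set" and H :: "'e set" and s t :: "'e \<Rightarrow> 'v" and rv :: "'e \<Rightarrow> 'e"
    and aI :: "'v \<Rightarrow> 'v" and aH :: "'e \<Rightarrow> 'e" and Ihat :: "'v set"
  assumes graph: "graph_with_admissible_aut I H s t rv aI aH"
    and reps: "orbit_reps I aI Ihat"
begin

lemma finite_edges: "finite H"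
  using graph unfolding graph_with_admissible_aut_def by blast

lemma edge_ends: "h \<in> H \<Longrightarrow> s h \<in> I \<and> t h \<in> I"
  using graph unfolding graph_with_admissible_aut_def by blast

lemma reversal:
  assumes "h \<in> H"
  shows "rv h \<in> H" "rv (rv h) = h" "s (rv h) = t h" "t (rv h) = s h"
  using graph assms unfolding graph_with_admissible_aut_def by blast+

lemma reps_subset: "Ihat \<subseteq> I"
  using reps unfolding orbit_reps_def by blast

lemma vertex_periodic:
  assumes "v \<in> I" obtains p where "0 < p" "(aI ^^ p) v = v"
  using graph assms periodic_if_bij_betw_finite unfolding graph_with_admissible_aut_def by metis

lemma edge_periodic:
  assumes "h \<in> H" obtains p where "0 < p" "(aH ^^ p) h = h"
  using graph assms periodic_if_bij_betw_finite unfolding graph_with_admissible_aut_def by metis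

lemma orbit_vertex_eq: "v \<in> I \<Longrightarrow> w \<in> orbit aI v \<Longrightarrow> orbit aI w = orbit aI v"
  by (metis vertex_periodic orbit_eq_if_mem)

lemma orbit_edge_eq: "h \<in> H \<Longrightarrow> g \<in> orbit aH h \<Longrightarrow> orbit aH g = orbit aH h"
  by (metis edge_periodic orbit_eq_if_mem)

lemma funpow_aH_edge:
  assumes "h \<in> H"
  shows "(aH ^^ k) h \<in> H \<and> s ((aH ^^ k) h) = (aI ^^ k) (s h) \<and> t ((aH ^^ k) h) = (aI ^^ k) (t h)"
proof (induction k)
  case (Suc k)
  then show ?case using graph unfolding graph_with_admissible_aut_def by (auto dest: bij_betwE)
qed (simp add: assms)

lemma orbit_edge_subset: "h \<in> H \<Longrightarrow> orbit aH h \<subseteq> H"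
  unfolding orbit_def using funpow_aH_edge by blast

lemma ends_in_orbit:
  assumes "h \<in> H" "g \<in> orbit aH h"
  shows "s g \<in> orbit aI (s h)" "t g \<in> orbit aI (t h)"
  using assms funpow_aH_edge unfolding orbit_def by auto

lemma orb_size_ends_dvd:
  assumes "h \<in> H"
  shows "orb_size aI (s h) dvd orb_size aH h" "orb_size aI (t h) dvd orb_size aH h"
proof -
  obtain p where "0 < p" "(aH ^^ p) h = h" using edge_periodic[OF assms] .
  then have "(aH ^^ orb_size aH h) h = h" by (rule orb_size_minimal_period)
  then have "(aI ^^ orb_size aH h) (s h) = s h" "(aI ^^ orb_size aH h) (t h) = t h"
    using funpow_aH_edge[OF assms, of "orb_size aH h"] by auto
  then show "orb_size aI (s h) dvd orb_size aH h" "orb_size aI (t h) dvd orb_size aH h"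
    using edge_ends[OF assms] by (metis vertex_periodic funpow_eq_self_iff_orb_size_dvd)+
qed

lemma rep_mem:
  assumes "v \<in> I"
  shows "rep Ihat aI v \<in> Ihat" "rep Ihat aI v \<in> orbit aI v"
proof -
  have "\<exists>!j. j \<in> Ihat \<and> j \<in> orbit aI v" using reps assms unfolding orbit_reps_def by blast
  from theI'[OF this] show "rep Ihat aI v \<in> Ihat" "rep Ihat aI v \<in> orbit aI v"
    unfolding rep_def by auto
qed

lemma rep_eq_iff:
  assumes "i \<in> Ihat" "v \<in> I"
  shows "rep Ihat aI v = i \<longleftrightarrow> v \<in> orbit aI i"
proof
  assume "rep Ihat aI v = i"
  then have "orbit aI i = orbit aI v" using orbit_vertex_eq rep_mem assms(2) by metis
  then show "v \<in> orbit aI i" using self_in_orbit by metis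
next
  assume "v \<in> orbit aI i"
  then have "orbit aI v = orbit aI i" using orbit_vertex_eq assms reps_subset by blast
  then have "i \<in> orbit aI v" using self_in_orbit by metis
  moreover have "\<exists>!j. j \<in> Ihat \<and> j \<in> orbit aI v" using reps assms unfolding orbit_reps_def by blast
  ultimately show "rep Ihat aI v = i" unfolding rep_def using assms(1) by (blast intro: the1_equality)
qed

lemma hat_s_orbit:
  assumes "h \<in> H"
  shows "hat_s Ihat aI s (orbit aH h) = rep Ihat aI (s h)"
    and "hat_s Ihat aI t (orbit aH h) = rep Ihat aI (t h)"
proof -
  define g where "g = (SOME g. g \<in> orbit aH h)"
  have g: "g \<in> orbit aH h" unfolding g_def using self_in_orbit by (rule someI)
  have "orbit aI (s g) = orbit aI (s h)"
    using orbit_vertex_eq edge_ends[OF assms] ends_in_orbit(1)[OF assms g] by blast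
  moreover have "orbit aI (t g) = orbit aI (t h)"
    using orbit_vertex_eq edge_ends[OF assms] ends_in_orbit(2)[OF assms g] by blast
  ultimately show "hat_s Ihat aI s (orbit aH h) = rep Ihat aI (s h)"
    and "hat_s Ihat aI t (orbit aH h) = rep Ihat aI (t h)"
    unfolding hat_s_def g_def[symmetric] rep_def by simp_all
qed

lemma hat_e_orbit:
  assumes "h \<in> H"
  shows "hat_e n aH (orbit aH h) = e_of n aH h"
proof -
  define g where "g = (SOME g. g \<in> orbit aH h)"
  have "g \<in> orbit aH h" unfolding g_def using self_in_orbit by (rule someI)
  then have "orbit aH g = orbit aH h" by (rule orbit_edge_eq[OF assms])
  then show ?thesis unfolding hat_e_def e_of_def orb_size_def g_def[symmetric] by simp
qed

definition edge_orbits_between :: "'v \<Rightarrow> 'v \<Rightarrow> 'e set set" where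
  "edge_orbits_between i j = {Eo \<in> Hhat H aH. hat_s Ihat aI s Eo = i \<and> hat_s Ihat aI t Eo = j}"

lemma orbit_in_edge_orbits_between_iff:
  assumes "i \<in> Ihat" "j \<in> Ihat" "h \<in> H"
  shows "orbit aH h \<in> edge_orbits_between i j \<longleftrightarrow> s h \<in> orbit aI i \<and> t h \<in> orbit aI j"
  using assms edge_ends[OF assms(3)]
  by (simp add: edge_orbits_between_def Hhat_def hat_s_orbit rep_eq_iff)

lemma Union_edge_orbits_between:
  assumes "i \<in> Ihat" "j \<in> Ihat"
  shows "\<Union> (edge_orbits_between i j) = {h \<in> H. s h \<in> orbit aI i \<and> t h \<in> orbit aI j}"
proof (intro equalityI subsetI)
  fix h assume "h \<in> \<Union> (edge_orbits_between i j)"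
  then obtain g where g: "g \<in> H" "h \<in> orbit aH g" "orbit aH g \<in> edge_orbits_between i j"
    unfolding edge_orbits_between_def Hhat_def by blast
  then have "h \<in> H" "orbit aH h = orbit aH g" using orbit_edge_subset orbit_edge_eq by blast+
  then show "h \<in> {h \<in> H. s h \<in> orbit aI i \<and> t h \<in> orbit aI j}"
    using g(3) orbit_in_edge_orbits_between_iff[OF assms \<open>h \<in> H\<close>] by simp
next
  fix h assume h: "h \<in> {h \<in> H. s h \<in> orbit aI i \<and> t h \<in> orbit aI j}"
  then have "orbit aH h \<in> edge_orbits_between i j"
    using orbit_in_edge_orbits_between_iff[OF assms, of h] by simp
  then show "h \<in> \<Union> (edge_orbits_between i j)" using self_in_orbit by (rule UnionI)
qed

lemma pairwise_disjnt_edge_orbits: "pairwise disjnt (Hhat H aH)"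
proof -
  have "orbit aH a = orbit aH b" if "a \<in> H" "b \<in> H" "x \<in> orbit aH a" "x \<in> orbit aH b" for a b x
    using orbit_edge_eq[OF that(1,3)] orbit_edge_eq[OF that(2,4)] by simp
  then show ?thesis unfolding pairwise_def disjnt_def Hhat_def by blast
qed

lemma card_edges_between:
  assumes "i \<in> Ihat" "j \<in> Ihat"
  shows "card {h \<in> H. s h \<in> orbit aI i \<and> t h \<in> orbit aI j}
           = (\<Sum>Eo\<in>edge_orbits_between i j. card Eo)"
proof -
  have "pairwise disjnt (edge_orbits_between i j)"
    using pairwise_disjnt_edge_orbits unfolding edge_orbits_between_def pairwise_def by blast
  moreover have "finite Eo" if "Eo \<in> edge_orbits_between i j" for Eo
    using that finite_edges orbit_edge_subset
    unfolding edge_orbits_between_def Hhat_def by (auto intro: finite_subset)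
  ultimately show ?thesis
    unfolding Union_edge_orbits_between[OF assms, symmetric] by (rule card_Union_disjoint)
qed

lemma card_edges_between_swap:
  "card {h \<in> H. s h \<in> A \<and> t h \<in> B} = card {h \<in> H. s h \<in> B \<and> t h \<in> A}"
proof (rule bij_betw_same_card, rule bij_betw_byWitness[where f' = rv])
  show "rv ` {h \<in> H. s h \<in> A \<and> t h \<in> B} \<subseteq> {h \<in> H. s h \<in> B \<and> t h \<in> A}"
    and "rv ` {h \<in> H. s h \<in> B \<and> t h \<in> A} \<subseteq> {h \<in> H. s h \<in> A \<and> t h \<in> B}"
    by (rule image_subsetI, simp add: reversal)+
qed (simp_all add: reversal)

lemma tilde_edges_between:
  "{x \<in> tilde_H n Ihat H s t aI aH. tilde_s Ihat aI s x \<in> Pair i ` {z. z ^ e_of n aI i = 1}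
      \<and> tilde_t Ihat aI t x \<in> Pair j ` {z. z ^ e_of n aI j = 1}}
   = Sigma (edge_orbits_between i j)
       (\<lambda>Eo. compatible_root_pairs (e_of n aI i) (e_of n aI j) (hat_e n aH Eo))"
  by (auto simp: tilde_H_def tilde_s_def tilde_t_def edge_orbits_between_def compatible_root_pairs_def)

lemma card_tilde_edges_over_orbit:
  assumes dvd_n: "0 < n" "\<forall>v\<in>I. orb_size aI v dvd n" "\<forall>h\<in>H. orb_size aH h dvd n"
    and ij: "i \<in> Ihat" "j \<in> Ihat" and Eo: "Eo \<in> edge_orbits_between i j"
  shows "card (compatible_root_pairs (e_of n aI i) (e_of n aI j) (hat_e n aH Eo)) * orb_size aI j
           = e_of n aI i * card Eo"
proof -
  obtain h where h: "h \<in> H" "Eo = orbit aH h"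
    using Eo unfolding edge_orbits_between_def Hhat_def by blast
  have "s h \<in> orbit aI i" "t h \<in> orbit aI j"
    using orbit_in_edge_orbits_between_iff[OF ij h(1)] Eo h(2) by auto
  then have "orbit aI (s h) = orbit aI i" "orbit aI (t h) = orbit aI j"
    using ij reps_subset orbit_vertex_eq by blast+
  then have ends: "orb_size aI (s h) = orb_size aI i" "orb_size aI (t h) = orb_size aI j"
    unfolding orb_size_def by simp_all
  obtain u where u: "orb_size aH h = orb_size aI i * u"
    using orb_size_ends_dvd(1)[OF h(1)] ends(1) by (auto elim: dvdE)
  obtain w where w: "orb_size aH h = orb_size aI j * w"
    using orb_size_ends_dvd(2)[OF h(1)] ends(2) by (auto elim: dvdE)
  obtain e where e: "n = orb_size aH h * e" using dvd_n(3) h(1) by (auto elim: dvdE)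
  have "0 < orb_size aI i" "0 < orb_size aI j"
    using dvd_n ij reps_subset by (auto intro: dvd_pos_nat)
  have "0 < orb_size aH h" using e dvd_n(1) by auto
  then have "0 < e" "0 < u" "0 < w" using e u w dvd_n(1) by (metis nat_0_less_mult_iff)+
  have hat_e: "hat_e n aH Eo = e" using hat_e_orbit[OF h(1)] e \<open>0 < n\<close> by (simp add: h(2) e_of_def)
  have ei: "e_of n aI i = u * e"
    using \<open>0 < orb_size aI i\<close> by (simp add: e_of_def e u mult.assoc)
  have ej: "e_of n aI j = w * e"
    using \<open>0 < orb_size aI j\<close> by (simp add: e_of_def e w mult.assoc)
  have "card (compatible_root_pairs (u * e) (w * e) e) * e = (u * e) * (w * e)"
    using \<open>0 < e\<close> \<open>0 < u\<close> \<open>0 < w\<close> by (intro card_compatible_root_pairs) auto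
  then have "card (compatible_root_pairs (u * e) (w * e) e) = u * w * e"
    using \<open>0 < e\<close> by (simp add: ac_simps)
  moreover have "card Eo = orb_size aI j * w" using w h(2) by (simp add: orb_size_def)
  ultimately show ?thesis by (simp add: hat_e ei ej ac_simps)
qed

lemma card_tilde_edges_between:
  assumes dvd_n: "0 < n" "\<forall>v\<in>I. orb_size aI v dvd n" "\<forall>h\<in>H. orb_size aH h dvd n"
    and ij: "i \<in> Ihat" "j \<in> Ihat"
  shows "card {x \<in> tilde_H n Ihat H s t aI aH. tilde_s Ihat aI s x \<in> Pair i ` {z. z ^ e_of n aI i = 1}
               \<and> tilde_t Ihat aI t x \<in> Pair j ` {z. z ^ e_of n aI j = 1}} * orb_size aI j
         = e_of n aI i * (\<Sum>Eo\<in>edge_orbits_between i j. card Eo)"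
proof -
  have "0 < e_of n aI i" "0 < e_of n aI j"
    using dvd_n ij reps_subset by (auto intro: e_of_pos)
  moreover have "finite (edge_orbits_between i j)"
    using finite_edges unfolding edge_orbits_between_def Hhat_def by simp
  ultimately show ?thesis
    unfolding tilde_edges_between
    by (simp add: card_SigmaI finite_compatible_root_pairs sum_distrib_left sum_distrib_right
        card_tilde_edges_over_orbit[OF dvd_n ij])
qed

end

theorem lemma2p1:
  fixes I :: "'v set" and H :: "'e set" and s t :: "'e \<Rightarrow> 'v" and rv :: "'e \<Rightarrow> 'e"
    and aI :: "'v \<Rightarrow> 'v" and aH :: "'e \<Rightarrow> 'e" and \<Omega> :: "'e set"
    and n :: nat and Ihat :: "'v set" and \<eta> :: complex
  assumes graph: "graph_with_admissible_aut I H s t rv aI aH"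
    and orient: "stable_acyclic_orientation H s t rv aH \<Omega>"
    and n_pos: "n > 0"
    and dI: "\<forall>i\<in>I. orb_size aI i dvd n"
    and dH: "\<forall>h\<in>H. orb_size aH h dvd n"
    and reps: "orbit_reps I aI Ihat"
    and eta: "\<eta> ^ n = 1" "\<forall>k. 0 < k \<and> k < n \<longrightarrow> \<eta> ^ k \<noteq> 1"
  shows "\<forall>i\<in>Ihat. \<forall>j\<in>Ihat.
           cartan (tilde_H n Ihat H s t aI aH) (tilde_s Ihat aI s) (tilde_t Ihat aI t)
                  (tilde_aI aI \<eta>) (i, 1) (j, 1)
           = cartan H s t aI j i"
proof (intro ballI)
  interpret graph_with_orbit_reps I H s t rv aI aH Ihat using graph reps by unfold_locales
  have primitive: "\<And>k. \<eta> ^ k = 1 \<longleftrightarrow> n dvd k" using power_eq_one_iff_dvd_order[OF n_pos eta] .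
  fix i j assume ij: "i \<in> Ihat" "j \<in> Ihat"
  then have dvd: "orb_size aI i dvd n" "orb_size aI j dvd n" using dI reps_subset by auto
  show "cartan (tilde_H n Ihat H s t aI aH) (tilde_s Ihat aI s) (tilde_t Ihat aI t)
          (tilde_aI aI \<eta>) (i, 1) (j, 1) = cartan H s t aI j i"
  proof (cases "i = j")
    case False
    let ?T = "{x \<in> tilde_H n Ihat H s t aI aH. tilde_s Ihat aI s x \<in> Pair i ` {z. z ^ e_of n aI i = 1}
                \<and> tilde_t Ihat aI t x \<in> Pair j ` {z. z ^ e_of n aI j = 1}}"
    let ?N = "\<Sum>Eo\<in>edge_orbits_between i j. card Eo"
    have "0 < e_of n aI i" "0 < orb_size aI j" using n_pos dvd by (auto intro: e_of_pos dvd_pos_nat)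
    have "cartan (tilde_H n Ihat H s t aI aH) (tilde_s Ihat aI s) (tilde_t Ihat aI t)
            (tilde_aI aI \<eta>) (i, 1) (j, 1) = - real (card ?T) / real (e_of n aI i)"
      using False
      by (simp add: cartan_def orbit_tilde_aI[OF primitive n_pos] orb_size_tilde_aI[OF primitive n_pos] dvd)
    also have "\<dots> = - real ?N / real (orb_size aI j)"
      using card_tilde_edges_between[OF n_pos dI dH ij] \<open>0 < e_of n aI i\<close> \<open>0 < orb_size aI j\<close>
      by (simp add: field_simps del: of_nat_sum flip: of_nat_mult)
    also have "\<dots> = cartan H s t aI j i"
      using False by (simp add: cartan_def card_edges_between_swap card_edges_between[OF ij])
    finally show ?thesis .
  qed (simp add: cartan_def)
qed
end
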